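(* Let $S=(P,L)$ be a slim dense near hexagon, let $Q_1,Q_2$ be two disjoint big quads of $S$, and let $Y$ be the subspace of $S$ generated by $Q_1\cup Q_2$. For $\{i,j\}=\{1,2\}$ and $x\in P\setminus Y$, let $x^{j}$ denote the unique point of $Q_j$ at distance $1$ from $x$, and for $y\in Q_i$ let $z_y$ denote the unique point of $Q_j$ at distance $1$ from $y$. Then for every $x\in P\setminus Y$ and $\{i,j\}=\{1,2\}$ we have $d(z_{x^{i}},x^{j})=1$ and $d(z_{x^{1}},z_{x^{2}})=d(x^{1},x^{2})=2$; that is, $x^{1},z_{x^{1}},x^{2},z_{x^{2}}$ form a quadrangle in the collinearity graph.
   Context: A slim partial linear space has exactly $3$ points per line; $d$ is the distance in the collinearity graph. A near hexagon is a connected partial linear space of diameter $3$ with no point collinear with all others such that every point $x$ has a unique nearest point on every line. A quad is a convex subset of diameter $2$ (containing all shortest paths between its points) in which no point is collinear with all others; the near hexagon is dense if any two points at distance $2$ lie in a quad. A quad $Q$ is big if every point of $S$ has distance at most $1$ from $Q$ (and then a point outside $Q$ has a unique nearest point in $Q$). A subspace is a set of points containing every line meeting it in at least two points; the subspace generated by a set is the intersection of all subspaces containing it. *)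

theory Defs
  imports Main
begin

definition partial_linear_space :: "'a set \<Rightarrow> 'a set set \<Rightarrow> bool" where
  "partial_linear_space P L \<longleftrightarrow>
     (\<forall>l\<in>L. l \<subseteq> P \<and> finite l \<and> card l \<ge> 2) \<and>
     (\<forall>x\<in>P. \<forall>y\<in>P. x \<noteq> y \<longrightarrow> (\<forall>l\<in>L. \<forall>m\<in>L. x \<in> l \<and> y \<in> l \<and> x \<in> m \<and> y \<in> m \<longrightarrow> l = m))"

definition slim :: "'a set set \<Rightarrow> bool" where
  "slim L \<longleftrightarrow> (\<forall>l\<in>L. finite l \<and> card l = 3)"

definition coll :: "'a set set \<Rightarrow> 'a \<Rightarrow> 'a \<Rightarrow> bool" where
  "coll L x y \<longleftrightarrow> x \<noteq> y \<and> (\<exists>l\<in>L. x \<in> l \<and> y \<in> l)"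

definition walk :: "'a set set \<Rightarrow> 'a list \<Rightarrow> bool" where
  "walk L ps \<longleftrightarrow> ps \<noteq> [] \<and> (\<forall>i. Suc i < length ps \<longrightarrow> coll L (ps ! i) (ps ! Suc i))"

definition walk_from_to :: "'a set set \<Rightarrow> 'a list \<Rightarrow> 'a \<Rightarrow> 'a \<Rightarrow> bool" where
  "walk_from_to L ps x y \<longleftrightarrow> walk L ps \<and> hd ps = x \<and> last ps = y"

definition dist :: "'a set set \<Rightarrow> 'a \<Rightarrow> 'a \<Rightarrow> nat" where
  "dist L x y = (LEAST n. \<exists>ps. walk_from_to L ps x y \<and> length ps = Suc n)"

definition connected_geom :: "'a set \<Rightarrow> 'a set set \<Rightarrow> bool" where
  "connected_geom P L \<longleftrightarrow> (\<forall>x\<in>P. \<forall>y\<in>P. \<exists>ps. walk_from_to L ps x y)"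

definition near_hexagon :: "'a set \<Rightarrow> 'a set set \<Rightarrow> bool" where
  "near_hexagon P L \<longleftrightarrow>
     partial_linear_space P L \<and> connected_geom P L \<and>
     (\<forall>x\<in>P. \<forall>y\<in>P. dist L x y \<le> 3) \<and> (\<exists>x\<in>P. \<exists>y\<in>P. dist L x y = 3) \<and>
     (\<forall>x\<in>P. \<exists>y\<in>P. y \<noteq> x \<and> \<not> coll L x y) \<and>
     (\<forall>x\<in>P. \<forall>l\<in>L. \<exists>!y. y \<in> l \<and> (\<forall>z\<in>l. z \<noteq> y \<longrightarrow> dist L x y < dist L x z))"

definition convex_set :: "'a set set \<Rightarrow> 'a set \<Rightarrow> bool" where
  "convex_set L X \<longleftrightarrow> (\<forall>x\<in>X. \<forall>y\<in>X. \<forall>ps.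
      walk_from_to L ps x y \<and> length ps = Suc (dist L x y) \<longrightarrow> set ps \<subseteq> X)"

definition quad :: "'a set \<Rightarrow> 'a set set \<Rightarrow> 'a set \<Rightarrow> bool" where
  "quad P L Q \<longleftrightarrow> Q \<subseteq> P \<and> convex_set L Q \<and>
     (\<forall>x\<in>Q. \<forall>y\<in>Q. dist L x y \<le> 2) \<and> (\<exists>x\<in>Q. \<exists>y\<in>Q. dist L x y = 2) \<and>
     (\<forall>x\<in>Q. \<exists>y\<in>Q. y \<noteq> x \<and> \<not> coll L x y)"

definition dense :: "'a set \<Rightarrow> 'a set set \<Rightarrow> bool" where
  "dense P L \<longleftrightarrow> (\<forall>x\<in>P. \<forall>y\<in>P. dist L x y = 2 \<longrightarrow> (\<exists>Q. quad P L Q \<and> x \<in> Q \<and> y \<in> Q))"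

definition big_quad :: "'a set \<Rightarrow> 'a set set \<Rightarrow> 'a set \<Rightarrow> bool" where
  "big_quad P L Q \<longleftrightarrow> quad P L Q \<and> (\<forall>x\<in>P. \<exists>q\<in>Q. dist L x q \<le> 1)"

definition subspace :: "'a set \<Rightarrow> 'a set set \<Rightarrow> 'a set \<Rightarrow> bool" where
  "subspace P L X \<longleftrightarrow> X \<subseteq> P \<and> (\<forall>l\<in>L. card (l \<inter> X) \<ge> 2 \<longrightarrow> l \<subseteq> X)"

definition generated_subspace :: "'a set \<Rightarrow> 'a set set \<Rightarrow> 'a set \<Rightarrow> 'a set" where
  "generated_subspace P L A = \<Inter>{X. subspace P L X \<and> A \<subseteq> X}"

definition proj1 :: "'a set set \<Rightarrow> 'a set \<Rightarrow> 'a \<Rightarrow> 'a" where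
  "proj1 L Q x = (THE q. q \<in> Q \<and> dist L x q = 1)"

end

theory Submission
  imports Defs
begin

text \<open>Since \<open>x\<close> lies outside the subspace \<open>Y\<close>, no line through \<open>x\<close> meets \<open>Y\<close> in two
points. Hence \<open>x\<close> has exactly one neighbour \<open>x\<^sup>i\<close> in each big quad \<open>Q\<^sub>i\<close> (two neighbours
would span a line through \<open>x\<close> or, by convexity, force \<open>x\<close> into the quad), and \<open>x\<^sup>1\<close>, \<open>x\<^sup>2\<close>
are not collinear. Every point \<open>z\<close> of \<open>Q\<^sub>2\<close> within distance 2 of \<open>x\<close> is collinear with \<open>x\<^sup>2\<close>:
otherwise \<open>z\<close> has distance 2 to both \<open>x\<close> and \<open>x\<^sup>2\<close>, so the point of the line \<open>x x\<^sup>2\<close>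
nearest to \<open>z\<close> is a third point collinear with \<open>z\<close>; it lies in \<open>Q\<^sub>2\<close> by convexity, which
puts that line into \<open>Y\<close>.
Applied to a neighbour \<open>z\<close> of \<open>x\<^sup>1\<close> in \<open>Q\<^sub>2\<close> this gives the edge \<open>z x\<^sup>2\<close>, and \<open>z\<close> is unique
because two such points would be collinear common neighbours of \<open>x\<^sup>1\<close> and \<open>x\<^sup>2\<close>.\<close>

lemma walk_from_to_singleton: "walk_from_to L [u] x y \<longleftrightarrow> u = x \<and> u = y"
  by (simp add: walk_from_to_def walk_def)

lemma walk_from_to_pair: "walk_from_to L [u, v] x y \<longleftrightarrow> u = x \<and> v = y \<and> coll L x y"
  by (auto simp: walk_from_to_def walk_def less_Suc_eq)

lemma walk_from_to_triple:
  "coll L x w \<Longrightarrow> coll L w y \<Longrightarrow> walk_from_to L [x, w, y] x y"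
  by (auto simp: walk_from_to_def walk_def less_Suc_eq nth_Cons split: nat.split)

lemma dist_le_length:
  "walk_from_to L ps x y \<Longrightarrow> dist L x y \<le> length ps - 1"
  unfolding dist_def by (rule Least_le) (auto simp: walk_from_to_def walk_def)

lemma dist_attained:
  assumes "walk_from_to L ps x y"
  shows "\<exists>qs. walk_from_to L qs x y \<and> length qs = Suc (dist L x y)"
  unfolding dist_def
  by (rule LeastI_ex[where P = "\<lambda>n. \<exists>qs. walk_from_to L qs x y \<and> length qs = Suc n"])
     (use assms in \<open>auto simp: walk_from_to_def walk_def intro!: exI[of _ "length ps - 1"]\<close>)

lemma eq_if_dist_eq_0:
  assumes "walk_from_to L ps x y" "dist L x y = 0"
  shows "x = y"
proof -
  obtain qs where "walk_from_to L qs x y" "length qs = 1"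
    using dist_attained[OF assms(1)] assms(2) by auto
  then show ?thesis
    by (auto simp: length_Suc_conv walk_from_to_singleton)
qed

lemma coll_if_dist_eq_1:
  assumes "walk_from_to L ps x y" "dist L x y = 1"
  shows "coll L x y"
proof -
  obtain qs where "walk_from_to L qs x y" "length qs = 2"
    using dist_attained[OF assms(1)] assms(2) by auto
  then show ?thesis
    by (auto simp: length_Suc_conv numeral_2_eq_2 walk_from_to_pair)
qed

lemma coll_sym: "coll L x y \<Longrightarrow> coll L y x"
  by (auto simp: coll_def)

lemma dist_eq_1_if_coll: "coll L x y \<Longrightarrow> dist L x y = 1"
  using dist_le_length[of L "[x, y]" x y] eq_if_dist_eq_0[of L "[x, y]" x y]
  by (fastforce simp: walk_from_to_pair coll_def)

lemma dist_le_2_if_coll: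
  "coll L x w \<Longrightarrow> coll L w y \<Longrightarrow> dist L x y \<le> 2"
  using dist_le_length[OF walk_from_to_triple] by fastforce

lemma coll_if_dist_le_1:
  assumes "connected_geom P L" "x \<in> P" "y \<in> P" "x \<noteq> y" "dist L x y \<le> 1"
  shows "coll L x y"
proof -
  obtain ps where "walk_from_to L ps x y"
    using assms(1-3) unfolding connected_geom_def by blast
  then show ?thesis
    using eq_if_dist_eq_0 coll_if_dist_eq_1 assms(4,5) by (metis le_neq_implies_less less_one)
qed

lemma coll_iff_dist_eq_1:
  assumes "connected_geom P L" "x \<in> P" "y \<in> P"
  shows "coll L x y \<longleftrightarrow> dist L x y = 1"
proof -
  obtain ps where "walk_from_to L ps x y"
    using assms unfolding connected_geom_def by blast
  then show ?thesis
    using coll_if_dist_eq_1 dist_eq_1_if_coll by metis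
qed

lemma dist_eq_2I:
  assumes "connected_geom P L" "x \<in> P" "y \<in> P" "x \<noteq> y" "\<not> coll L x y" "dist L x y \<le> 2"
  shows "dist L x y = 2"
  using coll_if_dist_le_1[OF assms(1-4)] assms(5,6) by linarith

lemma quad_common_neighbour_mem:
  assumes "quad P L Q" "a \<in> Q" "c \<in> Q" "dist L a c = 2" "coll L a b" "coll L b c"
  shows "b \<in> Q"
  using assms(1-4) walk_from_to_triple[OF assms(5,6)] unfolding quad_def convex_set_def by fastforce

lemma subspace_line_closed:
  assumes "partial_linear_space P L" "subspace P L Y"
    and "l \<in> L" "a \<in> l" "b \<in> l" "a \<noteq> b" "a \<in> Y" "b \<in> Y"
  shows "l \<subseteq> Y"
proof -
  have "finite l"
    using assms(1,3) by (auto simp: partial_linear_space_def)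
  then have "card {a, b} \<le> card (l \<inter> Y)"
    using assms(4-8) by (intro card_mono) auto
  then show ?thesis
    using assms(2,3,6) by (auto simp: subspace_def)
qed

lemma subspace_generated_subspace:
  assumes PL: "partial_linear_space P L" and "A \<subseteq> P"
  shows "subspace P L (generated_subspace P L A)"
proof -
  let ?Xs = "{X. subspace P L X \<and> A \<subseteq> X}"
  have "P \<in> ?Xs"
    using assms by (auto simp: subspace_def partial_linear_space_def)
  then have "\<Inter> ?Xs \<subseteq> P"
    by blast
  moreover have "l \<subseteq> X"
    if "l \<in> L" "card (l \<inter> \<Inter> ?Xs) \<ge> 2" "X \<in> ?Xs" for l X
  proof -
    have "finite l"
      using PL \<open>l \<in> L\<close> by (auto simp: partial_linear_space_def)
    then have "card (l \<inter> \<Inter> ?Xs) \<le> card (l \<inter> X)"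
      using \<open>X \<in> ?Xs\<close> by (intro card_mono) auto
    then show ?thesis
      using that by (auto simp: subspace_def)
  qed
  ultimately show ?thesis
    unfolding subspace_def generated_subspace_def by blast
qed

lemma generated_subspace_superset: "A \<subseteq> generated_subspace P L A"
  by (auto simp: generated_subspace_def)

locale near_hexagon_geometry =
  fixes P :: "'a set" and L :: "'a set set"
  assumes near_hexagon: "near_hexagon P L"
begin

lemma partial_linear_space: "partial_linear_space P L"
  and connected: "connected_geom P L"
  using near_hexagon by (auto simp: near_hexagon_def)

lemma line_subset: "l \<in> L \<Longrightarrow> l \<subseteq> P"
  using partial_linear_space by (auto simp: partial_linear_space_def)

lemma coll_mem: "coll L x y \<Longrightarrow> x \<in> P" "coll L x y \<Longrightarrow> y \<in> P"
  using line_subset by (auto simp: coll_def)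

lemma line_point_nearer:
  assumes "z \<in> P" "l \<in> L" "a \<in> l" "b \<in> l" "a \<noteq> b" "dist L z a = dist L z b"
  shows "\<exists>y\<in>l. y \<noteq> a \<and> y \<noteq> b \<and> dist L z y < dist L z a"
proof -
  obtain y where "y \<in> l" and nearest: "\<forall>w\<in>l. w \<noteq> y \<longrightarrow> dist L z y < dist L z w"
    using near_hexagon assms(1,2) unfolding near_hexagon_def by metis
  then show ?thesis
    using assms(3-6) by (metis less_irrefl)
qed

lemma mem_line_if_coll_both:
  assumes "l \<in> L" "a \<in> l" "b \<in> l" "a \<noteq> b" "coll L c a" "coll L c b"
  shows "c \<in> l"
proof -
  have "c \<in> P"
    using coll_mem(1)[OF assms(5)] .
  obtain y where y: "y \<in> l" "dist L c y < 1"
    using line_point_nearer[OF \<open>c \<in> P\<close> assms(1-4)]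
      dist_eq_1_if_coll[OF assms(5)] dist_eq_1_if_coll[OF assms(6)] by auto
  have "c = y"
  proof (rule ccontr)
    assume "c \<noteq> y"
    then have "coll L c y"
      using coll_if_dist_le_1[OF connected \<open>c \<in> P\<close>] y line_subset[OF assms(1)] by auto
    with y(2) show False
      using dist_eq_1_if_coll by fastforce
  qed
  with y(1) show ?thesis
    by simp
qed

lemma common_neighbours_not_coll:
  assumes "\<not> coll L a b" "a \<noteq> b" "c \<noteq> d"
    and "coll L c a" "coll L c b" "coll L d a" "coll L d b"
  shows "\<not> coll L c d"
proof
  assume "coll L c d"
  then obtain l where l: "l \<in> L" "c \<in> l" "d \<in> l"
    by (auto simp: coll_def)
  have "a \<in> l"
    using mem_line_if_coll_both[OF l assms(3) coll_sym[OF assms(4)] coll_sym[OF assms(6)]] .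
  moreover have "b \<in> l"
    using mem_line_if_coll_both[OF l assms(3) coll_sym[OF assms(5)] coll_sym[OF assms(7)]] .
  ultimately show False
    using l(1) assms(1,2) by (auto simp: coll_def)
qed

lemma dist_eq_2_if_common_neighbour:
  assumes "x \<noteq> y" "\<not> coll L x y" "coll L x w" "coll L w y"
  shows "dist L x y = 2"
  using dist_eq_2I[OF connected coll_mem(1)[OF assms(3)] coll_mem(2)[OF assms(4)] assms(1,2)
      dist_le_2_if_coll[OF assms(3,4)]] .

lemma not_coll_neighbours_in_subspace:
  assumes "subspace P L Y" "x \<notin> Y" "a \<in> Y" "b \<in> Y" "a \<noteq> b" "coll L x a" "coll L x b"
  shows "\<not> coll L a b"
proof
  assume "coll L a b"
  then obtain l where l: "l \<in> L" "a \<in> l" "b \<in> l"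
    by (auto simp: coll_def)
  have "x \<in> l"
    using mem_line_if_coll_both[OF l assms(5-7)] .
  moreover have "l \<subseteq> Y"
    using subspace_line_closed[OF partial_linear_space assms(1) l assms(5,3,4)] .
  ultimately show False
    using assms(2) by blast
qed

lemma quad_two_neighbours_coll:
  assumes "quad P L Q" "x \<notin> Q" "q \<in> Q" "q' \<in> Q" "q \<noteq> q'" "coll L x q" "coll L x q'"
  shows "coll L q q'"
proof (rule ccontr)
  assume "\<not> coll L q q'"
  moreover have "q \<in> P" "q' \<in> P" "dist L q q' \<le> 2"
    using assms(1,3,4) by (auto simp: quad_def)
  ultimately have "dist L q q' = 2"
    using dist_eq_2I[OF connected _ _ assms(5)] by blast
  then have "x \<in> Q"
    using quad_common_neighbour_mem[OF assms(1,3,4) _ coll_sym[OF assms(6)] assms(7)] by blast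
  with assms(2) show False ..
qed

lemma big_quad_neighbour:
  assumes "big_quad P L Q" "p \<in> P" "p \<notin> Q"
  shows "\<exists>q\<in>Q. coll L p q"
proof -
  obtain q where "q \<in> Q" "dist L p q \<le> 1"
    using assms(1,2) by (auto simp: big_quad_def)
  moreover have "Q \<subseteq> P"
    using assms(1) by (auto simp: big_quad_def quad_def)
  ultimately show ?thesis
    using coll_if_dist_le_1[OF connected assms(2)] assms(3) by blast
qed

lemma proj1_eqI:
  assumes "Q \<subseteq> P" "p \<in> P" "q \<in> Q" "coll L p q" "\<And>q'. q' \<in> Q \<Longrightarrow> coll L p q' \<Longrightarrow> q' = q"
  shows "proj1 L Q p = q"
  unfolding proj1_def
proof (rule the_equality)
  show "q \<in> Q \<and> dist L p q = 1"
    using assms(3,4) by (simp add: dist_eq_1_if_coll)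
next
  fix q' assume q': "q' \<in> Q \<and> dist L p q' = 1"
  then have "coll L p q'"
    using coll_iff_dist_eq_1[OF connected assms(2), of q'] assms(1) by blast
  with q' show "q' = q"
    using assms(5) by blast
qed

lemma coll_big_quad_iff_proj1:
  assumes "big_quad P L Q" "subspace P L Y" "Q \<subseteq> Y" "x \<in> P - Y"
  shows "q \<in> Q \<and> coll L x q \<longleftrightarrow> q = proj1 L Q x"
proof -
  have quad: "quad P L Q" and "Q \<subseteq> P"
    using assms(1) by (auto simp: big_quad_def quad_def)
  have "x \<notin> Q"
    using assms(3,4) by blast
  then obtain q0 where q0: "q0 \<in> Q" "coll L x q0"
    using big_quad_neighbour[OF assms(1)] assms(4) by blast
  have unique: "q' = q0" if q': "q' \<in> Q" "coll L x q'" for q'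
  proof (rule ccontr)
    assume "q' \<noteq> q0"
    then have "coll L q0 q'"
      using quad_two_neighbours_coll[OF quad \<open>x \<notin> Q\<close> q0(1) q'(1)] q0(2) q'(2) by blast
    moreover have "\<not> coll L q0 q'"
      using not_coll_neighbours_in_subspace[OF assms(2)] \<open>q' \<noteq> q0\<close> q0 q' assms(3,4) by blast
    ultimately show False
      by blast
  qed
  have "proj1 L Q x = q0"
    using proj1_eqI[OF \<open>Q \<subseteq> P\<close> _ q0] unique assms(4) by blast
  then show ?thesis
    using q0 unique by blast
qed

lemma coll_proj1_if_dist_le_2:
  assumes "big_quad P L Q" "subspace P L Y" "Q \<subseteq> Y" "x \<in> P - Y"
    and z: "z \<in> Q" "dist L z x \<le> 2" "z \<noteq> proj1 L Q x"
  shows "coll L z (proj1 L Q x)"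
proof (rule ccontr)
  define x' where "x' = proj1 L Q x"
  assume "\<not> coll L z (proj1 L Q x)"
  then have "\<not> coll L z x'"
    by (simp add: x'_def)
  have quad: "quad P L Q" and "Q \<subseteq> P"
    using assms(1) by (auto simp: big_quad_def quad_def)
  have x': "x' \<in> Q" "coll L x x'"
    using coll_big_quad_iff_proj1[OF assms(1-4), of x'] by (simp_all add: x'_def)
  have "z \<in> P" "x' \<in> P" "z \<noteq> x"
    using z(1) x'(1) \<open>Q \<subseteq> P\<close> assms(3,4) by auto
  have "dist L z x' = 2"
    using dist_eq_2I[OF connected \<open>z \<in> P\<close> \<open>x' \<in> P\<close>] z(3) x'_def \<open>\<not> coll L z x'\<close>
      quad z(1) x'(1) by (auto simp: quad_def)
  have "\<not> coll L z x"
    using coll_big_quad_iff_proj1[OF assms(1-4), of z] z(1,3) coll_sym[of L z x] by blast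
  then have "dist L z x = 2"
    using dist_eq_2I[OF connected \<open>z \<in> P\<close>] assms(4) \<open>z \<noteq> x\<close> z(2) by blast
  obtain l where l: "l \<in> L" "x \<in> l" "x' \<in> l" and "x \<noteq> x'"
    using x'(2) by (auto simp: coll_def)
  then obtain y where y: "y \<in> l" "y \<noteq> x" "y \<noteq> x'" "dist L z y < 2"
    using line_point_nearer[OF \<open>z \<in> P\<close> l] \<open>dist L z x = 2\<close> \<open>dist L z x' = 2\<close> by auto
  have "z \<noteq> y"
    using \<open>\<not> coll L z x\<close> \<open>z \<noteq> x\<close> y(1) l(1,2) by (auto simp: coll_def)
  then have "coll L z y"
    using coll_if_dist_le_1[OF connected \<open>z \<in> P\<close>] y(1,4) line_subset[OF l(1)] by auto
  moreover have "coll L y x'" "coll L x y"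
    using y(1-3) l by (auto simp: coll_def)
  ultimately have "y \<in> Q"
    using quad_common_neighbour_mem[OF quad z(1) x'(1) \<open>dist L z x' = 2\<close>] by blast
  then show False
    using not_coll_neighbours_in_subspace[OF assms(2) _ _ _ y(3)] \<open>coll L y x'\<close> \<open>coll L x y\<close>
      x' assms(3,4) by blast
qed

lemma proj1_proj1_not_coll:
  assumes "big_quad P L Qa" "big_quad P L Qb" "Qa \<inter> Qb = {}"
    and "subspace P L Y" "Qa \<union> Qb \<subseteq> Y" "x \<in> P - Y"
  shows "proj1 L Qa x \<noteq> proj1 L Qb x" and "\<not> coll L (proj1 L Qa x) (proj1 L Qb x)"
proof -
  let ?a = "proj1 L Qa x" and ?b = "proj1 L Qb x"
  have "Qa \<subseteq> Y" "Qb \<subseteq> Y"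
    using assms(5) by auto
  have a: "?a \<in> Qa" "coll L x ?a"
    using coll_big_quad_iff_proj1[OF assms(1,4) \<open>Qa \<subseteq> Y\<close> assms(6), of ?a] by simp_all
  have b: "?b \<in> Qb" "coll L x ?b"
    using coll_big_quad_iff_proj1[OF assms(2,4) \<open>Qb \<subseteq> Y\<close> assms(6), of ?b] by simp_all
  show "?a \<noteq> ?b"
    using a(1) b(1) assms(3) by auto
  then show "\<not> coll L ?a ?b"
    using not_coll_neighbours_in_subspace[OF assms(4) _ _ _ _ a(2) b(2)] a(1) b(1)
      \<open>Qa \<subseteq> Y\<close> \<open>Qb \<subseteq> Y\<close> assms(6) by blast
qed

lemma coll_proj1_if_coll_proj1:
  assumes "big_quad P L Qa" "big_quad P L Qb" "Qa \<inter> Qb = {}"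
    and "subspace P L Y" "Qa \<union> Qb \<subseteq> Y" "x \<in> P - Y"
    and z: "z \<in> Qb" "coll L (proj1 L Qa x) z"
  shows "coll L z (proj1 L Qb x)"
proof -
  have "coll L x (proj1 L Qa x)"
    using coll_big_quad_iff_proj1[OF assms(1,4) _ assms(6)] assms(5) by blast
  moreover have "z \<noteq> proj1 L Qb x"
    using z(2) proj1_proj1_not_coll(2)[OF assms(1-6)] by blast
  ultimately show ?thesis
    using coll_proj1_if_dist_le_2[OF assms(2,4) _ assms(6) z(1)] assms(5)
      dist_le_2_if_coll[OF coll_sym[OF z(2)] coll_sym] by blast
qed

lemma proj1_of_proj1:
  assumes "big_quad P L Qa" "big_quad P L Qb" "Qa \<inter> Qb = {}"
    and "subspace P L Y" "Qa \<union> Qb \<subseteq> Y" "x \<in> P - Y"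
  shows "proj1 L Qb (proj1 L Qa x) \<in> Qb \<and> coll L (proj1 L Qa x) (proj1 L Qb (proj1 L Qa x))
    \<and> coll L (proj1 L Qb (proj1 L Qa x)) (proj1 L Qb x)"
proof -
  define xa xb where "xa = proj1 L Qa x" and "xb = proj1 L Qb x"
  have to_xb: "coll L z xb" if "z \<in> Qb" "coll L xa z" for z
    using coll_proj1_if_coll_proj1[OF assms that(1)] that(2) by (simp add: xa_def xb_def)
  have "xa \<noteq> xb" "\<not> coll L xa xb"
    using proj1_proj1_not_coll[OF assms] by (simp_all add: xa_def xb_def)
  have "xa \<in> Qa"
    using coll_big_quad_iff_proj1[OF assms(1,4) _ assms(6), of xa] assms(5) by (auto simp: xa_def)
  then have "Qb \<subseteq> P" "xa \<in> P" "xa \<notin> Qb"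
    using assms(1-3) by (auto simp: big_quad_def quad_def)
  obtain z where z: "z \<in> Qb" "coll L xa z"
    using big_quad_neighbour[OF assms(2) \<open>xa \<in> P\<close> \<open>xa \<notin> Qb\<close>] by blast
  have "z' = z" if z': "z' \<in> Qb" "coll L xa z'" for z'
  proof (rule ccontr)
    assume "z' \<noteq> z"
    then have "coll L z z'"
      using quad_two_neighbours_coll[OF _ \<open>xa \<notin> Qb\<close> z(1) z'(1)] assms(2) z(2) z'(2)
      by (auto simp: big_quad_def)
    moreover have "\<not> coll L z z'"
      using common_neighbours_not_coll[OF \<open>\<not> coll L xa xb\<close> \<open>xa \<noteq> xb\<close> \<open>z' \<noteq> z\<close>[symmetric]
          coll_sym[OF z(2)] to_xb[OF z] coll_sym[OF z'(2)] to_xb[OF z']] .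
    ultimately show False
      by blast
  qed
  then have "proj1 L Qb xa = z"
    using proj1_eqI[OF \<open>Qb \<subseteq> P\<close> \<open>xa \<in> P\<close> z] by blast
  then show ?thesis
    using z to_xb xa_def xb_def by auto
qed

end

theorem proposition2p3:
  fixes P :: "'a set" and L :: "'a set set" and Q1 Q2 :: "'a set" and x :: 'a
  assumes "near_hexagon P L" and "slim L" and "dense P L"
    and "big_quad P L Q1" and "big_quad P L Q2" and "Q1 \<inter> Q2 = {}"
    and "x \<in> P - generated_subspace P L (Q1 \<union> Q2)"
  shows "dist L (proj1 L Q2 (proj1 L Q1 x)) (proj1 L Q2 x) = 1
       \<and> dist L (proj1 L Q1 (proj1 L Q2 x)) (proj1 L Q1 x) = 1
       \<and> dist L (proj1 L Q2 (proj1 L Q1 x)) (proj1 L Q1 (proj1 L Q2 x)) = 2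
       \<and> dist L (proj1 L Q1 x) (proj1 L Q2 x) = 2"
proof -
  interpret near_hexagon_geometry P L
    using assms(1) by unfold_locales
  define Y where "Y = generated_subspace P L (Q1 \<union> Q2)"
  have Y: "subspace P L Y" "Q1 \<union> Q2 \<subseteq> Y" "Q2 \<union> Q1 \<subseteq> Y" "x \<in> P - Y"
    using subspace_generated_subspace[OF partial_linear_space, of "Q1 \<union> Q2"]
      generated_subspace_superset[of "Q1 \<union> Q2" P L] assms(4,5,7)
    by (auto simp: Y_def big_quad_def quad_def)
  define x1 x2 z1 z2 where "x1 = proj1 L Q1 x" and "x2 = proj1 L Q2 x"
    and "z1 = proj1 L Q2 x1" and "z2 = proj1 L Q1 x2"
  have z1: "z1 \<in> Q2" "coll L x1 z1" "coll L z1 x2"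
    using proj1_of_proj1[OF assms(4,5,6) Y(1,2,4)] by (simp_all add: x1_def x2_def z1_def)
  have z2: "z2 \<in> Q1" "coll L x2 z2" "coll L z2 x1"
    using proj1_of_proj1[OF assms(5,4) _ Y(1,3,4)] assms(6) by (simp_all add: Int_commute x1_def x2_def z2_def)
  have "x1 \<noteq> x2" "\<not> coll L x1 x2"
    using proj1_proj1_not_coll[OF assms(4,5,6) Y(1,2,4)] by (simp_all add: x1_def x2_def)
  have "z1 \<noteq> z2"
    using z1(1) z2(1) assms(6) by auto
  have "\<not> coll L z1 z2"
    using common_neighbours_not_coll[OF \<open>\<not> coll L x1 x2\<close> \<open>x1 \<noteq> x2\<close> \<open>z1 \<noteq> z2\<close>
        coll_sym[OF z1(2)] z1(3) z2(3) coll_sym[OF z2(2)]] .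
  show ?thesis
    using dist_eq_1_if_coll[OF z1(3)] dist_eq_1_if_coll[OF z2(3)]
      dist_eq_2_if_common_neighbour[OF \<open>x1 \<noteq> x2\<close> \<open>\<not> coll L x1 x2\<close> z1(2,3)]
      dist_eq_2_if_common_neighbour[OF \<open>z1 \<noteq> z2\<close> \<open>\<not> coll L z1 z2\<close> coll_sym[OF z1(2)] coll_sym[OF z2(3)]]
    by (simp add: x1_def x2_def z1_def z2_def)
qed

end
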